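(* Let $\Omega\subseteq\mathbb{R}$ and fix $t\in\mathbb{N}$. Let $f^t,f^{t+1}:\Omega\to\mathbb{R}$ be continuously differentiable and strictly convex, and suppose that for all $z\in\Omega$: (i) $(f^t)'$ is differentiable and concave (at $z$), and (ii) $(f^{t+1})'(z)\le(f^t)'(z)$. Then for any $x,m\in\Omega$ with $x\le m$ and any $y,n\in\Omega$ such that $(f^{t+1})'(y)-(f^t)'(x)=(f^{t+1})'(n)-(f^t)'(m)=\xi$ for a fixed scalar $\xi$, we have $D^{t,t+1}(x,y)\le D^{t,t+1}(m,n)$.
   Context: The skewed Bregman divergence is $D^{t,t+1}(u,v)=f^t(u)-f^{t+1}(v)-(u-v)\,(f^{t+1})'(v)$. *)

theory Defs
  imports "HOL-Analysis.Analysis"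
begin

definition strictly_convex_on :: "real set \<Rightarrow> (real \<Rightarrow> real) \<Rightarrow> bool" where
  "strictly_convex_on S f \<longleftrightarrow> convex S \<and>
     (\<forall>x\<in>S. \<forall>y\<in>S. x \<noteq> y \<longrightarrow> (\<forall>u::real. 0 < u \<and> u < 1 \<longrightarrow>
        f (u * x + (1 - u) * y) < u * f x + (1 - u) * f y))"

definition skewed_bregman :: "(nat \<Rightarrow> real \<Rightarrow> real) \<Rightarrow> nat \<Rightarrow> real \<Rightarrow> real \<Rightarrow> real" where
  "skewed_bregman F t u v = F t u - F (Suc t) v - (u - v) * deriv (F (Suc t)) v"

end

theory Submission
  imports Defs
begin

text \<open>Write \<open>g = f\<^sup>t\<close>, \<open>h = f\<^sup>t\<^sup>+\<^sup>1\<close>, \<open>G = g'\<close>, \<open>H = h'\<close>. For fixed \<open>s\<close> the concave function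
  \<open>V s z = g s - h z - (s - z) (G s + \<xi>)\<close> of \<open>z\<close> is maximal exactly where \<open>H z = G s + \<xi>\<close>,
  so \<open>D(x, y) = \<Phi> x\<close> and \<open>D(m, n) = \<Phi> m\<close> for \<open>\<Phi> s = max\<^sub>z V s z\<close>. Formally
  \<open>\<Phi>' s = (z - s) G' s - \<xi>\<close> at the maximiser \<open>z\<close>, and this is nonnegative because
  \<open>\<xi> = H z - G s \<le> G z - G s \<le> G' s (z - s)\<close> by (ii) and the concavity of \<open>G\<close>.\<close>

lemma strictly_convex_on_imp_convex_on:
  assumes "strictly_convex_on S f"
  shows "convex_on S f"
  unfolding convex_on_alt
proof (intro conjI ballI allI impI)
  show "convex S"
    using assms by (simp add: strictly_convex_on_def)
next
  fix x y and \<mu> :: real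
  assume xy: "x \<in> S" "y \<in> S" and \<mu>: "0 \<le> \<mu> \<and> \<mu> \<le> 1"
  show "f (\<mu> *\<^sub>R x + (1 - \<mu>) *\<^sub>R y) \<le> \<mu> * f x + (1 - \<mu>) * f y"
  proof (cases "x = y \<or> \<mu> = 0 \<or> \<mu> = 1")
    case True
    then show ?thesis by (auto simp: algebra_simps)
  next
    case False
    then have "f (\<mu> * x + (1 - \<mu>) * y) < \<mu> * f x + (1 - \<mu>) * f y"
      using assms xy \<mu> unfolding strictly_convex_on_def by auto
    then show ?thesis
      by simp
  qed
qed

text \<open>Unlike \<open>convex_on_imp_above_tangent\<close>, the point of tangency may lie on the
  boundary of the domain, since the derivative is taken in the full neighbourhood.\<close>
lemma convex_on_ge_tangent:
  fixes f :: "real \<Rightarrow> real"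
  assumes conv: "convex_on A f" and c: "c \<in> A" and x: "x \<in> A"
    and f': "(f has_real_derivative f') (at c)"
  shows "f' * (x - c) \<le> f x - f c"
proof (cases x c rule: linorder_cases)
  assume xc: "c < x"
  have lim: "((\<lambda>y. (f y - f c) / (y - c)) \<longlongrightarrow> f') (at_right c)"
    using f' unfolding has_field_derivative_iff by (blast intro: tendsto_mono at_le)
  moreover have "eventually (\<lambda>y. (f y - f c) / (y - c) \<le> (f x - f c) / (x - c)) (at_right c)"
    using eventually_at_right_real[OF xc]
  proof eventually_elim
    fix y assume "y \<in> {c<..<x}"
    then have "(f c - f y) / (c - y) \<le> (f c - f x) / (c - x)"
      using convex_on_slope_le(1)[OF conv c x, of y] by auto
    then show "(f y - f c) / (y - c) \<le> (f x - f c) / (x - c)"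
      by (smt (verit) minus_divide_divide)
  qed
  ultimately have "f' \<le> (f x - f c) / (x - c)"
    by (intro tendsto_upperbound[OF lim]) (auto simp: trivial_limit_at_right_real)
  then show ?thesis
    using xc by (simp add: field_simps)
next
  assume xc: "x < c"
  have lim: "((\<lambda>y. (f y - f c) / (y - c)) \<longlongrightarrow> f') (at_left c)"
    using f' unfolding has_field_derivative_iff by (blast intro: tendsto_mono at_le)
  moreover have "eventually (\<lambda>y. (f x - f c) / (x - c) \<le> (f y - f c) / (y - c)) (at_left c)"
    using eventually_at_left_real[OF xc]
  proof eventually_elim
    fix y assume "y \<in> {x<..<c}"
    then show "(f x - f c) / (x - c) \<le> (f y - f c) / (y - c)"
      using convex_on_slope_le(2)[OF conv x c, of y] by auto
  qed
  ultimately have "(f x - f c) / (x - c) \<le> f'"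
    by (intro tendsto_lowerbound[OF lim]) (auto simp: trivial_limit_at_left_real)
  then show ?thesis
    using xc by (simp add: field_simps)
qed simp

lemma convex_on_derivative_mono:
  fixes f :: "real \<Rightarrow> real"
  assumes conv: "convex_on A f" and f': "\<And>z. z \<in> A \<Longrightarrow> (f has_real_derivative f' z) (at z)"
    and a: "a \<in> A" and b: "b \<in> A" and ab: "a \<le> b"
  shows "f' a \<le> f' b"
proof -
  have "f' a * (b - a) \<le> f b - f a" "f' b * (a - b) \<le> f a - f b"
    using convex_on_ge_tangent[OF conv] f' a b by blast+
  then have "0 \<le> (f' b - f' a) * (b - a)"
    by (simp add: algebra_simps)
  then show ?thesis
    using ab by (cases "a = b") (auto simp: zero_le_mult_iff)
qed

lemma concave_on_three_points:
  fixes f :: "real \<Rightarrow> real"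
  assumes conc: "concave_on A f" and a: "a \<in> A" and c: "c \<in> A" and ab: "a \<le> b" and bc: "b \<le> c"
  shows "(c - b) * f a + (b - a) * f c \<le> (c - a) * f b"
proof (cases "a = c")
  case True
  then show ?thesis
    using ab bc by simp
next
  case False
  then have ac: "a < c"
    using ab bc by simp
  define u where "u = (b - a) / (c - a)"
  have u: "0 \<le> u" "u \<le> 1"
    using ab bc ac by (auto simp: u_def field_simps)
  have u_scaled: "u * (c - a) = b - a"
    using ac by (simp add: u_def)
  then have b_eq: "(1 - u) * a + u * c = b"
    by (simp add: algebra_simps)
  have "(1 - u) * f a + u * f c \<le> f b"
    using concave_onD[OF conc u a c] b_eq by simp
  then have "(c - a) * ((1 - u) * f a + u * f c) \<le> (c - a) * f b"
    using ac by (intro mult_left_mono) auto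
  moreover have "(c - a) * ((1 - u) * f a + u * f c) = (c - a) * f a - (u * (c - a)) * f a + (u * (c - a)) * f c"
    by (simp add: algebra_simps)
  then have "(c - a) * ((1 - u) * f a + u * f c) = (c - b) * f a + (b - a) * f c"
    unfolding u_scaled by (simp add: algebra_simps)
  ultimately show ?thesis
    by simp
qed

text \<open>The tangent inequality for \<open>g\<close> reduces the increment to
  \<open>(z - s') (G s' - G s) - (G z - G s) (s' - s)\<close>, which the concavity of \<open>G\<close> bounds when
  \<open>z\<close> lies outside \<open>[s, s']\<close> and the monotonicity of \<open>G\<close> bounds when it lies inside.\<close>
lemma convex_concave_derivative_increment_ge:
  fixes g G :: "real \<Rightarrow> real"
  assumes conv: "convex_on A g" and g': "\<And>z. z \<in> A \<Longrightarrow> (g has_real_derivative G z) (at z)"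
    and conc: "concave_on A G"
    and s: "s \<in> A" and s': "s' \<in> A" and z: "z \<in> A" and ss': "s < s'"
    and \<xi>: "\<xi> \<le> G z - G s"
  shows "- 2 * (s' - s) * (G s' - G s)
           \<le> (g s' - (s' - z) * (G s' + \<xi>)) - (g s - (s - z) * (G s + \<xi>))"
proof -
  have mono: "G a \<le> G b" if "a \<in> A" "b \<in> A" "a \<le> b" for a b
    using convex_on_derivative_mono[OF conv g' that] .
  have "G s * (s' - s) \<le> g s' - g s"
    using convex_on_ge_tangent[OF conv s s' g'[OF s]] .
  moreover have "\<xi> * (s' - s) \<le> (G z - G s) * (s' - s)"
    using \<xi> ss' by (intro mult_right_mono) auto
  ultimately have reduced: "(z - s') * (G s' - G s) - (G z - G s) * (s' - s)
      \<le> (g s' - (s' - z) * (G s' + \<xi>)) - (g s - (s - z) * (G s + \<xi>))"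
    by (simp add: algebra_simps)
  have \<Delta>: "0 \<le> (s' - s) * (G s' - G s)"
    using ss' mono[OF s s'] by simp
  consider "s' \<le> z" | "z \<le> s" | "s \<le> z" "z \<le> s'"
    by linarith
  then have "- 2 * (s' - s) * (G s' - G s) \<le> (z - s') * (G s' - G s) - (G z - G s) * (s' - s)"
  proof cases
    case 1
    then show ?thesis
      using concave_on_three_points[OF conc s z, of s'] ss' \<Delta> by (simp add: algebra_simps)
  next
    case 2
    then show ?thesis
      using concave_on_three_points[OF conc z s', of s] ss' \<Delta> by (simp add: algebra_simps)
  next
    case 3
    have "(s' - s) * (G z - G s) \<le> (s' - s) * (G s' - G s)"
      using 3 ss' mono[OF z s'] by (intro mult_left_mono) auto
    moreover have "(s - s') * (G s' - G s) \<le> (z - s') * (G s' - G s)"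
      using 3 mono[OF s s'] ss' by (intro mult_right_mono) auto
    ultimately show ?thesis
      by (simp add: algebra_simps)
  qed
  with reduced show ?thesis
    by linarith
qed

text \<open>Telescoping over a uniform partition of \<open>[a, b]\<close> into \<open>N\<close> pieces gives
  \<open>f b - f a \<ge> -(b - a) (w b - w a) / N\<close> for every \<open>N\<close>.\<close>
lemma le_if_increments_ge:
  fixes f w :: "real \<Rightarrow> real"
  assumes ab: "a \<le> b"
    and incr: "\<And>s s'. a \<le> s \<Longrightarrow> s < s' \<Longrightarrow> s' \<le> b \<Longrightarrow> - (s' - s) * (w s' - w s) \<le> f s' - f s"
  shows "f a \<le> f b"
proof (cases "a = b")
  case False
  with ab have ab: "a < b"
    by simp
  have partition: "- ((b - a) * (w b - w a)) / real N \<le> f b - f a" if N: "0 < N" for N :: nat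
  proof -
    define \<delta> where "\<delta> = (b - a) / real N"
    define S where "S k = a + real k * \<delta>" for k :: nat
    have \<delta>: "0 < \<delta>"
      using ab N by (simp add: \<delta>_def)
    have S_range: "a \<le> S k \<and> S k \<le> b" if "k \<le> N" for k
    proof -
      have "real k * (b - a) \<le> real N * (b - a)"
        using that ab by (intro mult_right_mono) auto
      moreover have "0 \<le> real k * (b - a)"
        using ab by simp
      ultimately show ?thesis
        using N ab by (auto simp: S_def \<delta>_def field_simps)
    qed
    have "k \<le> N \<Longrightarrow> - \<delta> * (w (S k) - w a) \<le> f (S k) - f a" for k
    proof (induction k)
      case 0
      then show ?case by (simp add: S_def)
    next
      case (Suc k)
      have "S (Suc k) = S k + \<delta>"
        by (simp add: S_def algebra_simps)
      then have "- \<delta> * (w (S (Suc k)) - w (S k)) \<le> f (S (Suc k)) - f (S k)"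
        using incr[of "S k" "S (Suc k)"] S_range[of k] S_range[of "Suc k"] Suc.prems \<delta> by auto
      with Suc show ?case
        by (simp add: algebra_simps)
    qed
    moreover have "S N = b"
      using N by (simp add: S_def \<delta>_def)
    ultimately show ?thesis
      by (fastforce simp: \<delta>_def)
  qed
  have lim: "(\<lambda>N. - ((b - a) * (w b - w a)) / real N) \<longlonglongrightarrow> 0"
    by (rule lim_const_over_n)
  have "0 \<le> f b - f a"
    by (rule LIMSEQ_le_const2[OF lim]) (use partition in \<open>auto intro!: exI[of _ 1]\<close>)
  then show ?thesis
    by simp
qed simp

lemma skewed_divergence_mono:
  fixes g h G H :: "real \<Rightarrow> real"
  assumes conv_g: "convex_on A g" and conv_h: "convex_on A h"
    and g': "\<And>z. z \<in> A \<Longrightarrow> (g has_real_derivative G z) (at z)"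
    and h': "\<And>z. z \<in> A \<Longrightarrow> (h has_real_derivative H z) (at z)"
    and cont_H: "continuous_on A H" and conc_G: "concave_on A G"
    and H_le_G: "\<And>z. z \<in> A \<Longrightarrow> H z \<le> G z"
    and x: "x \<in> A" and m: "m \<in> A" and xm: "x \<le> m" and y: "y \<in> A" and n: "n \<in> A"
    and Hy: "H y = G x + \<xi>" and Hn: "H n = G m + \<xi>"
  shows "g x - h y - (x - y) * H y \<le> g m - h n - (m - n) * H n"
proof -
  have "convex A"
    using conv_g by (simp add: convex_on_def)
  then have between: "s \<in> A" if "s \<in> {x..m}" for s
    using mem_is_interval_1_I[of A x m s] is_interval_convex_1 x m that by auto
  have G_mono: "G a \<le> G b" if "a \<in> A" "b \<in> A" "a \<le> b" for a b
    using convex_on_derivative_mono[OF conv_g g' that] .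
  have "connected (H ` A)"
    using connected_continuous_image[OF cont_H convex_connected[OF \<open>convex A\<close>]] .
  have attained: "\<exists>z. z \<in> A \<and> H z = G s + \<xi>" if s: "s \<in> {x..m}" for s
  proof -
    have "H y \<le> G s + \<xi>" "G s + \<xi> \<le> H n"
      using G_mono[OF x between[OF s]] G_mono[OF between[OF s] m] s Hy Hn by simp_all
    then have "G s + \<xi> \<in> H ` A"
      using connectedD_interval[OF \<open>connected (H ` A)\<close>] y n by blast
    then show ?thesis
      by auto
  qed
  define Z where "Z s = (SOME z. z \<in> A \<and> H z = G s + \<xi>)" for s
  have Z: "Z s \<in> A \<and> H (Z s) = G s + \<xi>" if "s \<in> {x..m}" for s
    unfolding Z_def using someI_ex[OF attained[OF that]] .
  define V where "V s z = g s - h z - (s - z) * (G s + \<xi>)" for s z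
  have V_max: "V s z \<le> V s z'" if "z \<in> A" "z' \<in> A" "H z' = G s + \<xi>" for s z z'
    using convex_on_ge_tangent[OF conv_h that(2,1) h'[OF that(2)]] that(3)
    by (simp add: V_def algebra_simps)
  have "V x (Z x) \<le> V m (Z m)"
  proof (rule le_if_increments_ge[OF xm, where f = "\<lambda>s. V s (Z s)" and w = "\<lambda>s. 2 * G s"])
    fix s s' assume ss': "x \<le> s" "s < s'" "s' \<le> m"
    then have s: "s \<in> {x..m}" and s': "s' \<in> {x..m}"
      by auto
    have "\<xi> \<le> G (Z s) - G s"
      using Z[OF s] H_le_G[of "Z s"] by auto
    then have "- 2 * (s' - s) * (G s' - G s)
        \<le> (g s' - (s' - Z s) * (G s' + \<xi>)) - (g s - (s - Z s) * (G s + \<xi>))"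
      using convex_concave_derivative_increment_ge[OF conv_g g' conc_G between[OF s] between[OF s']]
        Z[OF s] ss' by blast
    then have "- 2 * (s' - s) * (G s' - G s) \<le> V s' (Z s) - V s (Z s)"
      by (simp add: V_def)
    moreover have "V s' (Z s) \<le> V s' (Z s')"
      using V_max Z[OF s] Z[OF s'] by blast
    ultimately show "- (s' - s) * (2 * G s' - 2 * G s) \<le> V s' (Z s') - V s (Z s)"
      by (simp add: algebra_simps)
  qed
  moreover have "V x y \<le> V x (Z x)" "V m (Z m) \<le> V m n"
    using V_max Z[of x] Z[of m] xm y n Hn by auto
  ultimately show ?thesis
    using Hy Hn by (simp add: V_def)
qed

theorem theorem5:
  fixes \<Omega> :: "real set" and F :: "nat \<Rightarrow> real \<Rightarrow> real" and t :: nat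
    and x m y n \<xi> :: real
  assumes diff_t: "\<forall>z\<in>\<Omega>. F t differentiable (at z)"
    and diff_t1: "\<forall>z\<in>\<Omega>. F (Suc t) differentiable (at z)"
    and cont_t: "continuous_on \<Omega> (deriv (F t))"
    and cont_t1: "continuous_on \<Omega> (deriv (F (Suc t)))"
    and sconv_t: "strictly_convex_on \<Omega> (F t)"
    and sconv_t1: "strictly_convex_on \<Omega> (F (Suc t))"
    and deriv_diff: "\<forall>z\<in>\<Omega>. deriv (F t) differentiable (at z)"
    and deriv_concave: "concave_on \<Omega> (deriv (F t))"
    and deriv_le: "\<forall>z\<in>\<Omega>. deriv (F (Suc t)) z \<le> deriv (F t) z"
    and x: "x \<in> \<Omega>" and m: "m \<in> \<Omega>" and xm: "x \<le> m"
    and y: "y \<in> \<Omega>" and n: "n \<in> \<Omega>"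
    and xi1: "deriv (F (Suc t)) y - deriv (F t) x = \<xi>"
    and xi2: "deriv (F (Suc t)) n - deriv (F t) m = \<xi>"
  shows "skewed_bregman F t x y \<le> skewed_bregman F t m n"
proof -
  have conv: "convex_on \<Omega> (F t)" "convex_on \<Omega> (F (Suc t))"
    using sconv_t sconv_t1 by (simp_all add: strictly_convex_on_imp_convex_on)
  have derivs: "(F t has_real_derivative deriv (F t) z) (at z)"
    "(F (Suc t) has_real_derivative deriv (F (Suc t)) z) (at z)" if "z \<in> \<Omega>" for z
    using diff_t diff_t1 that by (simp_all add: DERIV_deriv_iff_real_differentiable)
  have "F t x - F (Suc t) y - (x - y) * deriv (F (Suc t)) y
          \<le> F t m - F (Suc t) n - (m - n) * deriv (F (Suc t)) n"
    by (rule skewed_divergence_mono[where \<xi> = \<xi>, OF conv derivs cont_t1 deriv_concave _ x m xm y n])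
      (use deriv_le xi1 xi2 in auto)
  then show ?thesis
    unfolding skewed_bregman_def .
qed

end
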